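(* The class of finite linear orders has the Rank Property: for every countable ordinal $\alpha$ there is a countable linear order $X$ with $\mathsf{rk}(X)=\alpha$.
   Context: Let $\mathcal F$ be the class of finite linear orders (language $\{<\}$); countable linear orders are the structures considered; substructures are suborders and $\mathsf{age}(X)$ is the set of finite suborders of $X$. For $A\le B$, $B$ is a prime extension of $A$ if $|B\setminus A|=1$; a realization of $B$ in $X$ (where $A\le X$) is $C\le X$ with $A\le C$ and an order-isomorphism $B\to C$ fixing $A$ pointwise. For $F\in\mathsf{age}(X)$ define by recursion: $\mathsf{rk}_X(F)\ge0$ always; $\mathsf{rk}_X(F)\ge\alpha+1$ iff every prime extension $B\in\mathcal F$ of $F$ has a realization $C$ in $X$ with $\mathsf{rk}_X(C)\ge\alpha$; for limit $\alpha$, $\mathsf{rk}_X(F)\ge\alpha$ iff $\mathsf{rk}_X(F)\ge\beta$ for all $\beta<\alpha$. $\mathsf{rk}_X(F)=\sup\{\alpha:\mathsf{rk}_X(F)\ge\alpha\}$ (or $\infty$ if this holds for all ordinals), and $\mathsf{rk}(X)=\mathsf{rk}_X(\emptyset)$. *)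

theory Defs
  imports Main "HOL-Library.Countable_Set"
begin

text \<open>A countable linear order X is represented by a (reflexive) linear order relation
  L on a subset of nat (carrier Field L). Finite suborders of X are finite subsets
  F of Field L with the restricted order.\<close>

definition prime_ext :: "nat rel \<Rightarrow> nat set \<Rightarrow> nat rel \<Rightarrow> bool" where
  "prime_ext L F B \<longleftrightarrow> Linear_order B \<and> finite (Field B) \<and> F \<subseteq> Field B \<and>
     card (Field B - F) = 1 \<and> (\<forall>x\<in>F. \<forall>y\<in>F. (x, y) \<in> B \<longleftrightarrow> (x, y) \<in> L)"

definition realization :: "nat rel \<Rightarrow> nat set \<Rightarrow> nat rel \<Rightarrow> nat set \<Rightarrow> bool" where
  "realization L F B C \<longleftrightarrow> F \<subseteq> C \<and> C \<subseteq> Field L \<and>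
     (\<exists>g. bij_betw g (Field B) C \<and> (\<forall>x\<in>F. g x = x) \<and>
          (\<forall>x\<in>Field B. \<forall>y\<in>Field B. (x, y) \<in> B \<longleftrightarrow> (g x, g y) \<in> L))"

text \<open>Ordinals are represented by elements a of a well-order W (the ordinal being the
  order type of the strict initial segment below a). rk_ge W L a F means rk_X(F) \<ge> a,
  defined by transfinite recursion: zero / successor / limit case.\<close>
definition is_pred :: "'w rel \<Rightarrow> 'w \<Rightarrow> 'w \<Rightarrow> bool" where
  "is_pred W b a \<longleftrightarrow> (b, a) \<in> W \<and> b \<noteq> a \<and>
     \<not> (\<exists>c. (b, c) \<in> W \<and> (c, a) \<in> W \<and> c \<noteq> b \<and> c \<noteq> a)"

definition rk_ge :: "'w rel \<Rightarrow> nat rel \<Rightarrow> 'w \<Rightarrow> nat set \<Rightarrow> bool" where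
  "rk_ge W L = wfrec (W - Id) (\<lambda>g a F.
     if \<not> (\<exists>b. (b, a) \<in> W \<and> b \<noteq> a) then True
     else if (\<exists>b. is_pred W b a) then
       (\<forall>B. prime_ext L F B \<longrightarrow> (\<exists>C. realization L F B C \<and> g (THE b. is_pred W b a) C))
     else (\<forall>b. (b, a) \<in> W \<and> b \<noteq> a \<longrightarrow> g b F))"

text \<open>Extension of a well-order r (ordinal alpha) by two new top elements
  Inr False (representing alpha) < Inr True (representing alpha+1).\<close>
definition ext2 :: "'a rel \<Rightarrow> ('a + bool) rel" where
  "ext2 r = {(Inl x, Inl y) | x y. (x, y) \<in> r} \<union> {(Inl x, Inr b) | x b. x \<in> Field r}
     \<union> {(Inr False, Inr False), (Inr False, Inr True), (Inr True, Inr True)}"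

text \<open>rk(X) = alpha, where alpha is the order type of the well-order r:
  rk_X(\<emptyset>) \<ge> alpha and not rk_X(\<emptyset>) \<ge> alpha+1.\<close>
definition rank_eq :: "nat rel \<Rightarrow> 'a rel \<Rightarrow> bool" where
  "rank_eq L r \<longleftrightarrow> rk_ge (ext2 r) L (Inr False) {} \<and> \<not> rk_ge (ext2 r) L (Inr True) {}"

end

theory Submission
  imports Defs
begin

text \<open>
  Unwinding the recursion that defines \<open>rk\<^sub>X\<close>, the prime extensions of a finite
  \<open>F \<subseteq> X\<close> correspond to the cuts \<open>D\<close> of \<open>F\<close>, and their realizations to the points
  of the gap of \<open>D\<close>, the points of \<open>X - F\<close> filling that cut. Adding a point \<open>c\<close> of a
  gap splits this gap into its parts below and above \<open>c\<close> and leaves the other gaps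
  unchanged. Hence \<open>rk\<^sub>X(F) \<ge> \<alpha>\<close> iff every gap of \<open>F\<close> has split rank \<open>\<ge> \<alpha>\<close>, where
  a set has split rank \<open>\<ge> \<beta> + 1\<close> iff one of its points splits it into two sets of
  split rank \<open>\<ge> \<beta>\<close>; in particular \<open>rk(X)\<close> is the split rank of \<open>X\<close>.

  The orders \<open>X(0) = \<emptyset>\<close>, \<open>X(\<beta> + 1) = X(\<beta>) + 1 + X(\<beta>)\<close> and
  \<open>X(\<lambda>) = \<Sum>\<beta><\<lambda>. X(\<beta>)\<close> have split rank exactly their index; the upper bound for
  \<open>X(\<beta>)\<close> is proved simultaneously with the bound \<open>\<beta> + 2\<close> for the partial sum
  \<open>\<Sum>\<gamma>\<le>\<beta>. X(\<gamma>)\<close>. For countable \<open>\<alpha>\<close> the order \<open>X(\<alpha>)\<close> is countable, and a copy of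
  it on \<open>\<nat>\<close> has rank \<open>\<alpha>\<close>.
\<close>

section \<open>Split rank\<close>

text \<open>The recursion pattern of \<^const>\<open>rk_ge\<close>, abstracted over its successor step, so that
  the unfolding equations are proved once for \<^const>\<open>rk_ge\<close> and for the split rank.\<close>
definition rank_rec :: "'w rel \<Rightarrow> (('x \<Rightarrow> bool) \<Rightarrow> 'x \<Rightarrow> bool) \<Rightarrow> 'w \<Rightarrow> 'x \<Rightarrow> bool" where
  "rank_rec W P = wfrec (W - Id) (\<lambda>g a x.
     if \<not> (\<exists>b. (b, a) \<in> W \<and> b \<noteq> a) then True
     else if (\<exists>b. is_pred W b a) then P (g (THE b. is_pred W b a)) x
     else (\<forall>b. (b, a) \<in> W \<and> b \<noteq> a \<longrightarrow> g b x))"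

lemma rk_ge_eq_rank_rec:
  "rk_ge W L = rank_rec W (\<lambda>h F. \<forall>B. prime_ext L F B \<longrightarrow> (\<exists>C. realization L F B C \<and> h C))"
  unfolding rk_ge_def rank_rec_def ..

definition split_rank_ge :: "'w rel \<Rightarrow> 'b rel \<Rightarrow> 'w \<Rightarrow> 'b set \<Rightarrow> bool" where
  "split_rank_ge W R = rank_rec W (\<lambda>h S. \<exists>c\<in>S. h (S \<inter> underS R c) \<and> h (S \<inter> aboveS R c))"

locale ordinal_rel = W: wo_rel W for W :: "'w rel"
begin

lemma is_pred_underS: "is_pred W b a \<Longrightarrow> b \<in> W.underS a"
  unfolding is_pred_def underS_def by simp

lemma is_pred_unique:
  assumes "is_pred W b a" and "is_pred W b' a"
  shows "b = b'"
proof -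
  have "b \<in> Field W" "b' \<in> Field W"
    using assms unfolding is_pred_def by (auto intro: FieldI1)
  then have "(b, b') \<in> W \<or> (b', b) \<in> W"
    using W.TOTALS by blast
  then show ?thesis
    using assms unfolding is_pred_def by blast
qed

lemma the_is_pred: "is_pred W b a \<Longrightarrow> (THE b. is_pred W b a) = b"
  using is_pred_unique by blast

lemma underS_is_pred:
  assumes "is_pred W p a" and "b \<in> W.underS a"
  shows "(b, p) \<in> W"
proof -
  have "b \<in> Field W" "p \<in> Field W"
    using assms unfolding is_pred_def underS_def by (auto intro: FieldI1)
  then have "(b, p) \<in> W \<or> (p, b) \<in> W"
    using W.TOTALS by blast
  then show ?thesis
    using assms unfolding is_pred_def underS_def by blast
qed

lemma is_pred_suc:
  assumes "g \<in> W.underS a"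
  shows "is_pred W g (W.suc {g})" and "(W.suc {g}, a) \<in> W"
proof -
  have a: "a \<in> W.AboveS {g}"
    using assms by (auto simp: underS_def AboveS_def intro: FieldI2)
  have g: "{g} \<subseteq> Field W"
    using assms by (auto simp: underS_def intro: FieldI1)
  have s: "W.suc {g} \<in> W.AboveS {g}"
    using W.suc_AboveS[OF g] a by blast
  have between: "c = g \<or> c = W.suc {g}" if "(g, c) \<in> W" "(c, W.suc {g}) \<in> W" for c
  proof (rule ccontr)
    assume "\<not> (c = g \<or> c = W.suc {g})"
    then have "c \<in> W.AboveS {g}"
      using that by (auto simp: AboveS_def intro: FieldI2)
    then have "(W.suc {g}, c) \<in> W"
      by (rule W.suc_least_AboveS)
    then have "c = W.suc {g}"
      by (rule antisymD[OF W.ANTISYM that(2)])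
    then show False
      using \<open>\<not> (c = g \<or> c = W.suc {g})\<close> by simp
  qed
  have "(g, W.suc {g}) \<in> W" "g \<noteq> W.suc {g}"
    using s by (auto simp: AboveS_def)
  with between show "is_pred W g (W.suc {g})"
    unfolding is_pred_def by blast
  show "(W.suc {g}, a) \<in> W"
    using W.suc_least_AboveS[OF a] .
qed

lemma ordinal_cases [case_names zero pred limit]:
  obtains "W.underS a = {}" | b where "is_pred W b a" | "W.underS a \<noteq> {}" "\<nexists>b. is_pred W b a"
  by blast

lemma ordinal_induct [case_names step]:
  assumes "\<And>a. (\<And>b. b \<in> W.underS a \<Longrightarrow> P b) \<Longrightarrow> P a"
  shows "P a"
  using assms by (rule W.well_order_induct) (simp add: underS_def)

lemma rank_rec_zero:
  assumes "W.underS a = {}"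
  shows "rank_rec W P a x"
proof -
  have zero: "\<not> (\<exists>b. (b, a) \<in> W \<and> b \<noteq> a)"
    using assms by (auto simp: underS_def)
  show ?thesis
    unfolding rank_rec_def
    by (subst wfrec[OF W.WF]) (simp only: zero not_False_eq_True if_True)
qed

lemma rank_rec_pred:
  assumes "is_pred W b a"
  shows "rank_rec W P a x = P (rank_rec W P b) x"
proof -
  have b: "(b, a) \<in> W - Id"
    using assms unfolding is_pred_def by simp
  have nonzero: "\<exists>b. (b, a) \<in> W \<and> b \<noteq> a" and succ: "\<exists>b. is_pred W b a"
    using assms b by auto
  show ?thesis
    unfolding rank_rec_def
    by (subst wfrec[OF W.WF]) (simp only: nonzero succ if_True if_False not_True_eq_False
        the_is_pred[OF assms] cut_apply[OF b])
qed

lemma rank_rec_limit: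
  assumes "W.underS a \<noteq> {}" and limit: "\<nexists>b. is_pred W b a"
  shows "rank_rec W P a x = (\<forall>b\<in>W.underS a. rank_rec W P b x)"
proof -
  have nonzero: "\<exists>b. (b, a) \<in> W \<and> b \<noteq> a"
    using assms(1) unfolding underS_def by blast
  have restrict: "(\<forall>b. (b, a) \<in> W \<and> b \<noteq> a \<longrightarrow> cut f (W - Id) a b x) = (\<forall>b\<in>W.underS a. f b x)"
    for f
    unfolding underS_def by (auto simp: cut_apply)
  show ?thesis
    unfolding rank_rec_def
    by (subst wfrec[OF W.WF])
      (simp only: nonzero limit if_True if_False not_True_eq_False not_False_eq_True, rule restrict)
qed

lemma split_rank_ge_zero: "W.underS a = {} \<Longrightarrow> split_rank_ge W R a S"
  unfolding split_rank_ge_def by (rule rank_rec_zero)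

lemma split_rank_ge_pred:
  "is_pred W b a \<Longrightarrow> split_rank_ge W R a S \<longleftrightarrow>
    (\<exists>c\<in>S. split_rank_ge W R b (S \<inter> underS R c) \<and> split_rank_ge W R b (S \<inter> aboveS R c))"
  unfolding split_rank_ge_def by (rule rank_rec_pred)

lemma split_rank_ge_limit:
  "W.underS a \<noteq> {} \<Longrightarrow> \<nexists>b. is_pred W b a \<Longrightarrow>
    split_rank_ge W R a S \<longleftrightarrow> (\<forall>b\<in>W.underS a. split_rank_ge W R b S)"
  unfolding split_rank_ge_def by (rule rank_rec_limit)

lemma split_rank_ge_mono_set: "split_rank_ge W R a S \<Longrightarrow> S \<subseteq> T \<Longrightarrow> split_rank_ge W R a T"
proof (induction a arbitrary: S T rule: ordinal_induct)
  case (step a)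
  show ?case
  proof (cases rule: ordinal_cases[of a])
    case zero
    then show ?thesis by (rule split_rank_ge_zero)
  next
    case (pred b)
    from step.prems(1) obtain c where c: "c \<in> S" and
      low: "split_rank_ge W R b (S \<inter> underS R c)" and up: "split_rank_ge W R b (S \<inter> aboveS R c)"
      unfolding split_rank_ge_pred[OF pred] by blast
    have "S \<inter> underS R c \<subseteq> T \<inter> underS R c" "S \<inter> aboveS R c \<subseteq> T \<inter> aboveS R c"
      using step.prems(2) by auto
    then have "split_rank_ge W R b (T \<inter> underS R c)" "split_rank_ge W R b (T \<inter> aboveS R c)"
      using step.IH[OF is_pred_underS[OF pred]] low up by blast+
    moreover have "c \<in> T"
      using c step.prems(2) by blast
    ultimately show ?thesis
      unfolding split_rank_ge_pred[OF pred] by blast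
  next
    case limit
    have "split_rank_ge W R b T" if "b \<in> W.underS a" for b
    proof (rule step.IH[OF that _ step.prems(2)])
      show "split_rank_ge W R b S"
        using step.prems(1) that unfolding split_rank_ge_limit[OF limit] by blast
    qed
    then show ?thesis
      unfolding split_rank_ge_limit[OF limit] by blast
  qed
qed

lemma split_rank_ge_mono: "split_rank_ge W R a S \<Longrightarrow> (b, a) \<in> W \<Longrightarrow> split_rank_ge W R b S"
proof (induction a arbitrary: b S rule: ordinal_induct)
  case (step a)
  show ?case
  proof (cases "b = a")
    case False
    then have b: "b \<in> W.underS a"
      using step.prems(2) by (simp add: underS_def)
    show ?thesis
    proof (cases rule: ordinal_cases[of a])
      case zero
      then show ?thesis using b by simp
    next
      case (pred p)
      from step.prems(1) obtain c where "c \<in> S" and low: "split_rank_ge W R p (S \<inter> underS R c)"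
        unfolding split_rank_ge_pred[OF pred] by blast
      have "split_rank_ge W R b (S \<inter> underS R c)"
        using step.IH[OF is_pred_underS[OF pred] low underS_is_pred[OF pred b]] .
      then show ?thesis
        using split_rank_ge_mono_set by blast
    next
      case limit
      then show ?thesis
        using step.prems(1) b unfolding split_rank_ge_limit[OF limit] by blast
    qed
  qed (use step.prems in simp)
qed

lemma split_rank_ge_split:
  assumes "g \<in> W.underS a" and "split_rank_ge W R a S"
  shows "\<exists>c\<in>S. split_rank_ge W R g (S \<inter> underS R c) \<and> split_rank_ge W R g (S \<inter> aboveS R c)"
proof -
  have "split_rank_ge W R (W.suc {g}) S"
    using split_rank_ge_mono[OF assms(2) is_pred_suc(2)[OF assms(1)]] .
  then show ?thesis
    unfolding split_rank_ge_pred[OF is_pred_suc(1)[OF assms(1)]] .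
qed

lemma split_rank_ge_embed:
  assumes inj: "inj_on f X"
    and embed: "\<And>x y. x \<in> X \<Longrightarrow> y \<in> X \<Longrightarrow> (f x, f y) \<in> R' \<longleftrightarrow> (x, y) \<in> R"
  shows "S \<subseteq> X \<Longrightarrow> split_rank_ge W R' a (f ` S) \<longleftrightarrow> split_rank_ge W R a S"
proof (induction a arbitrary: S rule: ordinal_induct)
  case (step a)
  have parts: "f ` S \<inter> underS R' (f c) = f ` (S \<inter> underS R c)"
    "f ` S \<inter> aboveS R' (f c) = f ` (S \<inter> aboveS R c)" if "c \<in> S" for c
  proof -
    have c: "c \<in> X"
      using that step.prems by blast
    have "f x \<in> underS R' (f c) \<longleftrightarrow> x \<in> underS R c" "f x \<in> aboveS R' (f c) \<longleftrightarrow> x \<in> aboveS R c"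
      if "x \<in> X" for x
      using embed[OF that c] embed[OF c that] inj_on_eq_iff[OF inj that c]
      by (auto simp: underS_def aboveS_def)
    then show "f ` S \<inter> underS R' (f c) = f ` (S \<inter> underS R c)"
      "f ` S \<inter> aboveS R' (f c) = f ` (S \<inter> aboveS R c)"
      using step.prems by auto
  qed
  show ?case
  proof (cases rule: ordinal_cases[of a])
    case zero
    then show ?thesis by (simp add: split_rank_ge_zero)
  next
    case (pred b)
    have "split_rank_ge W R' b (f ` T) \<longleftrightarrow> split_rank_ge W R b T" if "T \<subseteq> S" for T
      using step.IH[OF is_pred_underS[OF pred]] step.prems that by blast
    then show ?thesis
      unfolding split_rank_ge_pred[OF pred] using parts by auto
  next
    case limit
    show ?thesis
      unfolding split_rank_ge_limit[OF limit] using step.IH step.prems by blast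
  qed
qed

end

section \<open>Cuts and gaps of finite suborders\<close>

definition is_cut :: "'a rel \<Rightarrow> 'a set \<Rightarrow> 'a set \<Rightarrow> bool" where
  "is_cut L F D \<longleftrightarrow> D \<subseteq> F \<and> (\<forall>x\<in>D. \<forall>y\<in>F. (y, x) \<in> L \<longrightarrow> y \<in> D)"

definition gap :: "'a rel \<Rightarrow> 'a set \<Rightarrow> 'a set \<Rightarrow> 'a set" where
  "gap L F D = {x \<in> Field L - F. \<forall>y\<in>F. (y, x) \<in> L \<longleftrightarrow> y \<in> D}"

definition cut_ext :: "'a rel \<Rightarrow> 'a set \<Rightarrow> 'a set \<Rightarrow> 'a \<Rightarrow> 'a rel" where
  "cut_ext L F D n = Restr L F \<union> insert n D \<times> {n} \<union> {n} \<times> (F - D)"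

lemma Linear_orderD:
  assumes "Linear_order L"
  shows "x \<in> Field L \<Longrightarrow> (x, x) \<in> L"
    and "(x, y) \<in> L \<Longrightarrow> (y, z) \<in> L \<Longrightarrow> (x, z) \<in> L"
    and "(x, y) \<in> L \<Longrightarrow> (y, x) \<in> L \<Longrightarrow> x = y"
    and "x \<in> Field L \<Longrightarrow> y \<in> Field L \<Longrightarrow> x \<noteq> y \<Longrightarrow> (x, y) \<in> L \<or> (y, x) \<in> L"
  using assms unfolding order_on_defs refl_on_def trans_def antisym_def total_on_def by blast+

lemma Linear_order_cut_ext:
  assumes L: "Linear_order L" and F: "F \<subseteq> Field L" and D: "is_cut L F D" and n: "n \<notin> F"
  shows "Linear_order (cut_ext L F D n)" and "Field (cut_ext L F D n) = insert n F"
proof -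
  let ?B = "cut_ext L F D n"
  have DF: "D \<subseteq> F" and down: "\<And>x y. x \<in> D \<Longrightarrow> y \<in> F \<Longrightarrow> (y, x) \<in> L \<Longrightarrow> y \<in> D"
    using D unfolding is_cut_def by auto
  note L = Linear_orderD[OF L]
  have mem: "(x, y) \<in> ?B \<longleftrightarrow> x \<in> F \<and> y \<in> F \<and> (x, y) \<in> L \<or> y = n \<and> x \<in> insert n D \<or> x = n \<and> y \<in> F - D"
    for x y
    unfolding cut_ext_def by auto
  have refl: "refl_on (insert n F) ?B"
    using L(1) F by (auto simp: refl_on_def mem)
  show field: "Field ?B = insert n F"
  proof
    show "Field ?B \<subseteq> insert n F"
      using DF by (auto simp: Field_def mem)
    show "insert n F \<subseteq> Field ?B"
      using refl by (auto simp: refl_on_def intro: FieldI1)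
  qed
  have "trans ?B"
    unfolding trans_def mem using L(2,4) F down n DF by blast
  moreover have "antisym ?B"
    unfolding antisym_def mem using L(3) n DF by blast
  moreover have "total_on (insert n F) ?B"
    unfolding total_on_def mem using L(4) F by blast
  moreover have "?B \<subseteq> insert n F \<times> insert n F"
    using DF by (auto simp: mem)
  ultimately show "Linear_order ?B"
    unfolding order_on_defs field using refl by blast
qed

lemma prime_ext_point: "prime_ext L F B \<Longrightarrow> \<exists>n. Field B - F = {n}"
  unfolding prime_ext_def by (simp add: card_1_singleton_iff)

lemma prime_ext_is_cut:
  assumes "prime_ext L F B"
  shows "is_cut L F {y \<in> F. (y, n) \<in> B}"
proof -
  have B: "Linear_order B" and agree: "\<forall>x\<in>F. \<forall>y\<in>F. (x, y) \<in> B \<longleftrightarrow> (x, y) \<in> L"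
    using assms unfolding prime_ext_def by auto
  show ?thesis
    unfolding is_cut_def using Linear_orderD(2)[OF B] agree by blast
qed

lemma prime_ext_cut_ext:
  assumes "Linear_order L" and "finite F" and "F \<subseteq> Field L" and "is_cut L F D" and "n \<notin> F"
  shows "prime_ext L F (cut_ext L F D n)" and "{y \<in> F. (y, n) \<in> cut_ext L F D n} = D"
proof -
  have "Field (cut_ext L F D n) - F = {n}"
    using Linear_order_cut_ext(2)[OF assms(1,3-5)] assms(5) by auto
  then show "prime_ext L F (cut_ext L F D n)"
    using Linear_order_cut_ext[OF assms(1,3-5)] assms(2,5)
    unfolding prime_ext_def by (auto simp: cut_ext_def)
  show "{y \<in> F. (y, n) \<in> cut_ext L F D n} = D"
    using assms(4,5) unfolding is_cut_def cut_ext_def by auto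
qed

lemma realization_imp_gap:
  assumes B: "prime_ext L F B" and n: "Field B - F = {n}" and C: "realization L F B C"
  shows "\<exists>c\<in>gap L F {y \<in> F. (y, n) \<in> B}. C = insert c F"
proof -
  obtain g where CL: "C \<subseteq> Field L" and bij: "bij_betw g (Field B) C" and g_F: "\<forall>x\<in>F. g x = x"
    and iso: "\<forall>x\<in>Field B. \<forall>y\<in>Field B. (x, y) \<in> B \<longleftrightarrow> (g x, g y) \<in> L"
    using C unfolding realization_def by blast
  have FB: "Field B = insert n F" and nF: "n \<notin> F"
    using n B unfolding prime_ext_def by auto
  have "g ` F = F"
    using g_F by force
  then have C_eq: "C = insert (g n) F"
    using bij FB by (simp add: bij_betw_def)
  have "g n \<notin> F"
  proof
    assume "g n \<in> F"
    then have "g (g n) = g n"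
      using g_F by blast
    then have "g n = n"
      using bij_betw_imp_inj_on[OF bij] \<open>g n \<in> F\<close> FB by (simp add: inj_on_eq_iff)
    then show False
      using \<open>g n \<in> F\<close> nF by simp
  qed
  moreover have "(y, g n) \<in> L \<longleftrightarrow> (y, n) \<in> B" if "y \<in> F" for y
    using iso that FB g_F by simp
  ultimately have "g n \<in> gap L F {y \<in> F. (y, n) \<in> B}"
    using CL C_eq unfolding gap_def by auto
  then show ?thesis
    using C_eq by blast
qed

lemma gap_imp_realization:
  assumes L: "Linear_order L" and F: "F \<subseteq> Field L" and B: "prime_ext L F B"
    and n: "Field B - F = {n}" and c: "c \<in> gap L F {y \<in> F. (y, n) \<in> B}"
  shows "realization L F B (insert c F)"
proof -
  have linB: "Linear_order B" and FB: "Field B = insert n F" and nF: "n \<notin> F"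
    and agree: "\<forall>x\<in>F. \<forall>y\<in>F. (x, y) \<in> B \<longleftrightarrow> (x, y) \<in> L"
    using n B unfolding prime_ext_def by auto
  have cL: "c \<in> Field L" and cF: "c \<notin> F" and below: "\<And>y. y \<in> F \<Longrightarrow> (y, c) \<in> L \<longleftrightarrow> (y, n) \<in> B"
    using c unfolding gap_def by auto
  have above: "(n, y) \<in> B \<longleftrightarrow> (c, y) \<in> L" if "y \<in> F" for y
  proof -
    have "(n, y) \<in> B \<longleftrightarrow> (y, n) \<notin> B"
      using Linear_order_in_diff_Id[OF linB] FB that nF by auto
    moreover have "(c, y) \<in> L \<longleftrightarrow> (y, c) \<notin> L"
      using Linear_order_in_diff_Id[OF L] cL F that cF by auto
    ultimately show ?thesis
      using below[OF that] by simp
  qed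
  have "bij_betw (id(n := c)) (Field B) (insert c F)"
    unfolding bij_betw_def inj_on_def FB using nF cF by auto
  moreover have "(x, y) \<in> B \<longleftrightarrow> ((id(n := c)) x, (id(n := c)) y) \<in> L"
    if "x \<in> Field B" "y \<in> Field B" for x y
    using that agree below above Linear_orderD(1)[OF linB] Linear_orderD(1)[OF L] cL FB
    by (cases "x = n"; cases "y = n") simp_all
  moreover have "F \<subseteq> insert c F" "insert c F \<subseteq> Field L" "\<forall>x\<in>F. (id(n := c)) x = x"
    using F cL nF by auto
  ultimately show ?thesis
    unfolding realization_def by blast
qed

lemma gap_insert_below:
  assumes L: "Linear_order L" and c: "c \<in> gap L F D" and D: "is_cut L F D"
  shows "is_cut L (insert c F) D" and "gap L (insert c F) D = gap L F D \<inter> underS L c"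
proof -
  have cL: "c \<in> Field L" and cF: "c \<notin> F" and cD: "\<And>y. y \<in> F \<Longrightarrow> (y, c) \<in> L \<longleftrightarrow> y \<in> D"
    using c unfolding gap_def by auto
  have DF: "D \<subseteq> F"
    using D unfolding is_cut_def by auto
  have "(c, x) \<notin> L" if "x \<in> D" for x
    using that DF cD cF Linear_orderD(3)[OF L, of c x] by auto
  then show "is_cut L (insert c F) D"
    using D unfolding is_cut_def by auto
  have "(x, c) \<in> L \<and> x \<noteq> c \<longleftrightarrow> (c, x) \<notin> L" if "x \<in> Field L" for x
    using Linear_order_in_diff_Id[OF L that cL] by auto
  then show "gap L (insert c F) D = gap L F D \<inter> underS L c"
    using cF DF unfolding gap_def underS_def by auto
qed

lemma gap_insert_above:
  assumes c: "c \<in> gap L F D" and D: "is_cut L F D"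
  shows "is_cut L (insert c F) (insert c D)"
    and "gap L (insert c F) (insert c D) = gap L F D \<inter> aboveS L c"
proof -
  have cF: "c \<notin> F" and cD: "\<And>y. y \<in> F \<Longrightarrow> (y, c) \<in> L \<longleftrightarrow> y \<in> D"
    using c unfolding gap_def by auto
  have DF: "D \<subseteq> F"
    using D unfolding is_cut_def by auto
  show "is_cut L (insert c F) (insert c D)"
    using D cD unfolding is_cut_def by auto
  show "gap L (insert c F) (insert c D) = gap L F D \<inter> aboveS L c"
    using cF DF unfolding gap_def aboveS_def by auto
qed

text \<open>A point \<open>y \<in> F\<close> on which \<open>D'\<close> and \<open>D\<close> disagree lies between \<open>c\<close> and every
  point of the gap of \<open>D' - {c}\<close>, so it decides on which side of \<open>c\<close> that gap lies.\<close>
lemma gap_insert_side: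
  assumes L: "Linear_order L" and F: "F \<subseteq> Field L" and c: "c \<in> gap L F D"
    and D': "is_cut L (insert c F) D'"
    and y: "y \<in> F" "y \<in> D' - {c} \<longleftrightarrow> y \<notin> D" and x: "x \<in> gap L F (D' - {c})"
  shows "x \<noteq> c \<and> ((c, x) \<in> L \<longleftrightarrow> c \<in> D')"
proof -
  note L = Linear_orderD[OF L]
  have cL: "c \<in> Field L" and cF: "c \<notin> F" and cD: "(y, c) \<in> L \<longleftrightarrow> y \<in> D"
    using c y(1) unfolding gap_def by auto
  have down: "\<And>x y. x \<in> D' \<Longrightarrow> y \<in> insert c F \<Longrightarrow> (y, x) \<in> L \<Longrightarrow> y \<in> D'"
    using D' unfolding is_cut_def by auto
  have xL: "x \<in> Field L" and xE: "(y, x) \<in> L \<longleftrightarrow> y \<in> D' - {c}"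
    using x y(1) unfolding gap_def by auto
  show ?thesis
  proof (cases "y \<in> D' - {c}")
    case True
    then have "(y, c) \<notin> L" "y \<noteq> c"
      using y cD by auto
    then have cy: "(c, y) \<in> L"
      using L(4)[OF cL] F y(1) by blast
    then have "(c, x) \<in> L"
      using True xE L(2) by blast
    moreover have "c \<in> D'"
      using down[of y c] True cy by blast
    moreover have "x \<noteq> c"
      using True xE \<open>(y, c) \<notin> L\<close> by blast
    ultimately show ?thesis
      by blast
  next
    case False
    then have yc: "(y, c) \<in> L" and "(y, x) \<notin> L" "y \<noteq> x"
      using y cD xE x unfolding gap_def by auto
    then have "(x, y) \<in> L"
      using L(4)[OF xL] F y(1) by blast
    then have "(c, x) \<notin> L"
      using L(2,3) yc y(1) cF by blast
    moreover have "c \<notin> D'"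
      using down[of c y] yc y(1) False cF by auto
    ultimately show ?thesis
      using yc \<open>(y, x) \<notin> L\<close> by auto
  qed
qed

lemma gap_insert_other:
  assumes L: "Linear_order L" and F: "F \<subseteq> Field L" and c: "c \<in> gap L F D" and D: "is_cut L F D"
    and D': "is_cut L (insert c F) D'" and ne: "D' - {c} \<noteq> D"
  shows "is_cut L F (D' - {c})" and "gap L (insert c F) D' = gap L F (D' - {c})"
proof -
  have cF: "c \<notin> F"
    using c unfolding gap_def by auto
  have DF: "D \<subseteq> F" and D'F: "D' \<subseteq> insert c F"
    using D D' unfolding is_cut_def by auto
  show "is_cut L F (D' - {c})"
    using D' cF unfolding is_cut_def by auto
  obtain y where "y \<in> F" "y \<in> D' - {c} \<longleftrightarrow> y \<notin> D"
    using ne D'F DF by blast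
  note side = gap_insert_side[OF L F c D' this]
  show "gap L (insert c F) D' = gap L F (D' - {c})"
  proof
    show "gap L (insert c F) D' \<subseteq> gap L F (D' - {c})"
      unfolding gap_def using cF by auto
    show "gap L F (D' - {c}) \<subseteq> gap L (insert c F) D'"
      using side cF unfolding gap_def by auto
  qed
qed

context ordinal_rel
begin

lemma rk_ge_pred:
  "is_pred W b a \<Longrightarrow>
    rk_ge W L a F \<longleftrightarrow> (\<forall>B. prime_ext L F B \<longrightarrow> (\<exists>C. realization L F B C \<and> rk_ge W L b C))"
  unfolding rk_ge_eq_rank_rec by (rule rank_rec_pred)

lemma rk_ge_pred_iff_gaps:
  assumes p: "is_pred W b a" and L: "Linear_order L" and fin: "finite F" and F: "F \<subseteq> Field L"
  shows "rk_ge W L a F \<longleftrightarrow> (\<forall>D. is_cut L F D \<longrightarrow> (\<exists>c\<in>gap L F D. rk_ge W L b (insert c F)))"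
proof
  assume rk: "rk_ge W L a F"
  show "\<forall>D. is_cut L F D \<longrightarrow> (\<exists>c\<in>gap L F D. rk_ge W L b (insert c F))"
  proof (intro allI impI)
    fix D
    assume D: "is_cut L F D"
    obtain n :: nat where n: "n \<notin> F"
      using ex_new_if_finite[OF infinite_UNIV_nat fin] by blast
    note B = prime_ext_cut_ext[OF L fin F D n]
    from rk obtain C where C: "realization L F (cut_ext L F D n) C" and "rk_ge W L b C"
      unfolding rk_ge_pred[OF p] using B(1) by blast
    have "Field (cut_ext L F D n) - F = {n}"
      using Linear_order_cut_ext(2)[OF L F D n] n by auto
    from realization_imp_gap[OF B(1) this C] obtain c where "c \<in> gap L F D" "C = insert c F"
      unfolding B(2) by blast
    with \<open>rk_ge W L b C\<close> show "\<exists>c\<in>gap L F D. rk_ge W L b (insert c F)"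
      by blast
  qed
next
  assume gaps: "\<forall>D. is_cut L F D \<longrightarrow> (\<exists>c\<in>gap L F D. rk_ge W L b (insert c F))"
  show "rk_ge W L a F"
    unfolding rk_ge_pred[OF p]
  proof (intro allI impI)
    fix B
    assume B: "prime_ext L F B"
    then obtain n where n: "Field B - F = {n}"
      using prime_ext_point by blast
    from gaps prime_ext_is_cut[OF B] obtain c
      where "c \<in> gap L F {y \<in> F. (y, n) \<in> B}" and "rk_ge W L b (insert c F)"
      by blast
    then show "\<exists>C. realization L F B C \<and> rk_ge W L b C"
      using gap_imp_realization[OF L F B n] by blast
  qed
qed

lemma rk_ge_zero: "W.underS a = {} \<Longrightarrow> rk_ge W L a F"
  unfolding rk_ge_eq_rank_rec by (rule rank_rec_zero)

lemma rk_ge_limit: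
  "W.underS a \<noteq> {} \<Longrightarrow> \<nexists>b. is_pred W b a \<Longrightarrow>
    rk_ge W L a F \<longleftrightarrow> (\<forall>b\<in>W.underS a. rk_ge W L b F)"
  unfolding rk_ge_eq_rank_rec by (rule rank_rec_limit)

lemma split_rank_ge_gaps_insert:
  assumes L: "Linear_order L" and F: "F \<subseteq> Field L" and c: "c \<in> gap L F D" and D: "is_cut L F D"
    and ba: "(b, a) \<in> W" and gaps: "\<And>E. is_cut L F E \<Longrightarrow> split_rank_ge W L a (gap L F E)"
    and low: "split_rank_ge W L b (gap L F D \<inter> underS L c)"
    and up: "split_rank_ge W L b (gap L F D \<inter> aboveS L c)"
    and D': "is_cut L (insert c F) D'"
  shows "split_rank_ge W L b (gap L (insert c F) D')"
proof (cases "D' - {c} = D")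
  case True
  moreover have "c \<notin> F" "D \<subseteq> F" "D' \<subseteq> insert c F"
    using c D D' unfolding gap_def is_cut_def by auto
  ultimately have "D' = D \<or> D' = insert c D"
    by blast
  then show ?thesis
    using low up gap_insert_below(2)[OF L c D] gap_insert_above(2)[OF c D] by auto
next
  case False
  note other = gap_insert_other[OF L F c D D' False]
  have "split_rank_ge W L b (gap L F (D' - {c}))"
    using split_rank_ge_mono[OF gaps[OF other(1)] ba] .
  then show ?thesis
    unfolding other(2) .
qed

lemma rk_ge_pred_step:
  assumes p: "is_pred W b a" and L: "Linear_order L" and fin: "finite F" and F: "F \<subseteq> Field L"
    and IH: "\<And>c. c \<in> Field L \<Longrightarrow> rk_ge W L b (insert c F) \<longleftrightarrow>
      (\<forall>D'. is_cut L (insert c F) D' \<longrightarrow> split_rank_ge W L b (gap L (insert c F) D'))"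
  shows "rk_ge W L a F \<longleftrightarrow> (\<forall>D. is_cut L F D \<longrightarrow> split_rank_ge W L a (gap L F D))"
  unfolding rk_ge_pred_iff_gaps[OF p L fin F]
proof (intro iffI allI impI)
  fix D
  assume "\<forall>D. is_cut L F D \<longrightarrow> (\<exists>c\<in>gap L F D. rk_ge W L b (insert c F))" and D: "is_cut L F D"
  then obtain c where c: "c \<in> gap L F D" and "rk_ge W L b (insert c F)"
    by blast
  then have gaps: "split_rank_ge W L b (gap L (insert c F) D')" if "is_cut L (insert c F) D'" for D'
    using IH that c unfolding gap_def by blast
  have "split_rank_ge W L b (gap L F D \<inter> underS L c)"
    using gaps[OF gap_insert_below(1)[OF L c D]] unfolding gap_insert_below(2)[OF L c D] .
  moreover have "split_rank_ge W L b (gap L F D \<inter> aboveS L c)"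
    using gaps[OF gap_insert_above(1)[OF c D]] unfolding gap_insert_above(2)[OF c D] .
  ultimately show "split_rank_ge W L a (gap L F D)"
    unfolding split_rank_ge_pred[OF p] using c by blast
next
  fix D
  assume split: "\<forall>D. is_cut L F D \<longrightarrow> split_rank_ge W L a (gap L F D)" and D: "is_cut L F D"
  from split D obtain c where c: "c \<in> gap L F D"
    and low: "split_rank_ge W L b (gap L F D \<inter> underS L c)"
    and up: "split_rank_ge W L b (gap L F D \<inter> aboveS L c)"
    unfolding split_rank_ge_pred[OF p] by blast
  have "(b, a) \<in> W"
    using p unfolding is_pred_def by blast
  note gaps = split_rank_ge_gaps_insert[OF L F c D this split[rule_format] low up]
  moreover have "c \<in> Field L"
    using c unfolding gap_def by blast
  ultimately show "\<exists>c\<in>gap L F D. rk_ge W L b (insert c F)"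
    using IH c by blast
qed

theorem rk_ge_iff_split_rank_ge_gaps:
  assumes L: "Linear_order L"
  shows "finite F \<Longrightarrow> F \<subseteq> Field L \<Longrightarrow>
    rk_ge W L a F \<longleftrightarrow> (\<forall>D. is_cut L F D \<longrightarrow> split_rank_ge W L a (gap L F D))"
proof (induction a arbitrary: F rule: ordinal_induct)
  case (step a)
  show ?case
  proof (cases rule: ordinal_cases[of a])
    case zero
    then show ?thesis
      by (simp add: rk_ge_zero split_rank_ge_zero)
  next
    case (pred b)
    show ?thesis
      using step.IH[OF is_pred_underS[OF pred]] step.prems
      by (intro rk_ge_pred_step[OF pred L step.prems]) simp
  next
    case limit
    have "rk_ge W L a F \<longleftrightarrow> (\<forall>b\<in>W.underS a. rk_ge W L b F)"
      by (rule rk_ge_limit[OF limit])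
    also have "\<dots> \<longleftrightarrow> (\<forall>b\<in>W.underS a. \<forall>D. is_cut L F D \<longrightarrow> split_rank_ge W L b (gap L F D))"
      using step.IH step.prems by simp
    also have "\<dots> \<longleftrightarrow> (\<forall>D. is_cut L F D \<longrightarrow> split_rank_ge W L a (gap L F D))"
      unfolding split_rank_ge_limit[OF limit] by blast
    finally show ?thesis .
  qed
qed

corollary rk_ge_empty_iff:
  assumes "Linear_order L"
  shows "rk_ge W L a {} \<longleftrightarrow> split_rank_ge W L a (Field L)"
proof -
  have "is_cut L {} D \<longleftrightarrow> D = {}" for D
    unfolding is_cut_def by auto
  moreover have "gap L {} {} = Field L"
    unfolding gap_def by auto
  ultimately show ?thesis
    using rk_ge_iff_split_rank_ge_gaps[OF assms, of "{}" a] by simp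
qed

end

section \<open>Orders of prescribed split rank\<close>

lemma total_on_lists_lexord:
  assumes "total_on A r"
  shows "total_on (lists A) (lexord r)"
  unfolding total_on_def
proof (intro ballI impI)
  fix xs ys
  assume "xs \<in> lists A" "ys \<in> lists A" "xs \<noteq> ys"
  then show "(xs, ys) \<in> lexord r \<or> (ys, xs) \<in> lexord r"
  proof (induction xs arbitrary: ys)
    case Nil
    then show ?case by (cases ys) auto
  next
    case (Cons x xs)
    then show ?case
      using assms unfolding total_on_def by (cases ys) auto
  qed
qed

text \<open>The points of \<open>X(g)\<close> are words, ordered lexicographically: if \<open>g\<close> is the successor
  of \<open>h\<close>, the letters \<open>Lft\<close>, \<open>Mid\<close>, \<open>Rgt\<close> select a summand of \<open>X(h) + 1 + X(h)\<close>;
  otherwise \<open>Lim b\<close> selects the summand \<open>X(b)\<close> of \<open>\<Sum>b<g. X(b)\<close>. The set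
  \<open>rank_words_upto W g\<close> is the partial sum \<open>\<Sum>b\<le>g. X(b)\<close>.\<close>

datatype 'w letter = Lim 'w | Lft | Mid | Rgt

fun letter_less :: "'w rel \<Rightarrow> 'w letter \<Rightarrow> 'w letter \<Rightarrow> bool" where
  "letter_less W (Lim a) (Lim b) \<longleftrightarrow> (a, b) \<in> W \<and> a \<noteq> b"
| "letter_less W (Lim a) _ \<longleftrightarrow> True"
| "letter_less W Lft Mid \<longleftrightarrow> True"
| "letter_less W Lft Rgt \<longleftrightarrow> True"
| "letter_less W Mid Rgt \<longleftrightarrow> True"
| "letter_less W _ _ \<longleftrightarrow> False"

definition word_le :: "'w rel \<Rightarrow> 'w letter list rel" where
  "word_le W = (lexord {(x, y). letter_less W x y})\<^sup>="

fun rank_word :: "'w rel \<Rightarrow> 'w \<Rightarrow> 'w letter list \<Rightarrow> bool" where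
  "rank_word W g [] \<longleftrightarrow> False"
| "rank_word W g (Mid # xs) \<longleftrightarrow> xs = [] \<and> (\<exists>b. is_pred W b g)"
| "rank_word W g (Lft # xs) \<longleftrightarrow> (\<exists>b. is_pred W b g) \<and> rank_word W (THE b. is_pred W b g) xs"
| "rank_word W g (Rgt # xs) \<longleftrightarrow> (\<exists>b. is_pred W b g) \<and> rank_word W (THE b. is_pred W b g) xs"
| "rank_word W g (Lim b # xs) \<longleftrightarrow> (\<nexists>h. is_pred W h g) \<and> b \<in> underS W g \<and> rank_word W b xs"

abbreviation rank_words :: "'w rel \<Rightarrow> 'w \<Rightarrow> 'w letter list set" where
  "rank_words W g \<equiv> Collect (rank_word W g)"

definition rank_words_upto :: "'w rel \<Rightarrow> 'w \<Rightarrow> 'w letter list set" where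
  "rank_words_upto W g = {Lim b # xs | b xs. (b, g) \<in> W \<and> rank_word W b xs}"

lemma irrefl_letter_less: "irrefl {(x, y). letter_less W x y}"
proof -
  have "\<not> letter_less W x x" for x
    by (cases x) auto
  then show ?thesis
    unfolding irrefl_def by simp
qed

lemma word_le_append_iff: "(p @ xs, p @ ys) \<in> word_le W \<longleftrightarrow> (xs, ys) \<in> word_le W"
  unfolding word_le_def by (simp add: lexord_same_pref_if_irrefl[OF irrefl_letter_less])

context ordinal_rel
begin

lemma underS_le_trans: "b \<in> W.underS a \<Longrightarrow> (a, g) \<in> W \<Longrightarrow> b \<in> W.underS g"
  unfolding underS_def using W.TRANS W.ANTISYM by (auto dest: transD antisymD)

lemma le_underS_trans: "(b, a) \<in> W \<Longrightarrow> a \<in> W.underS g \<Longrightarrow> b \<in> W.underS g"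
  unfolding underS_def using W.TRANS W.ANTISYM by (auto dest: transD antisymD)

lemma word_le_Lim_below:
  assumes "(Lim b' # t', Lim b # t) \<in> word_le W" and "b \<in> Field W"
  shows "(b', b) \<in> W"
  using assms W.REFL by (auto simp: word_le_def refl_on_def)

lemma word_le_Lim_above:
  assumes "(Lim b # t, Lim b' # t') \<in> word_le W" and "b \<in> Field W"
  shows "(b, b') \<in> W"
  using assms W.REFL by (auto simp: word_le_def refl_on_def)

lemma rank_word_pred_iff:
  assumes "is_pred W h g"
  shows "rank_word W g xs \<longleftrightarrow>
    xs = [Mid] \<or> (\<exists>t. xs = Lft # t \<and> rank_word W h t) \<or> (\<exists>t. xs = Rgt # t \<and> rank_word W h t)"
  using assms the_is_pred[OF assms] by (cases "(W, g, xs)" rule: rank_word.cases) auto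

lemma rank_word_limit_iff:
  assumes "\<nexists>h. is_pred W h g"
  shows "rank_word W g xs \<longleftrightarrow> (\<exists>b t. xs = Lim b # t \<and> b \<in> W.underS g \<and> rank_word W b t)"
  using assms by (cases "(W, g, xs)" rule: rank_word.cases) auto

lemma split_rank_ge_append:
  "split_rank_ge W (word_le W) a ((@) p ` S) \<longleftrightarrow> split_rank_ge W (word_le W) a S"
  by (rule split_rank_ge_embed[of _ UNIV]) (simp_all add: word_le_append_iff inj_on_def)

text \<open>The splitting point is \<open>[Mid]\<close> if \<open>g\<close> is a successor and \<open>[Lim a, Mid]\<close> otherwise.\<close>
lemma rank_words_splitting_point:
  assumes a: "is_pred W b a" and ag: "(a, g) \<in> W"
  obtains p e where "rank_word W g (p @ [Mid])" and "(b, e) \<in> W"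
    and "(@) (p @ [Lft]) ` rank_words W e \<subseteq> rank_words W g \<inter> underS (word_le W) (p @ [Mid])"
    and "(@) (p @ [Rgt]) ` rank_words W e \<subseteq> rank_words W g \<inter> aboveS (word_le W) (p @ [Mid])"
proof (cases "\<exists>h. is_pred W h g")
  case True
  then obtain h where h: "is_pred W h g" ..
  show ?thesis
  proof (rule that[of "[]" h])
    show "(b, h) \<in> W"
      using underS_is_pred[OF h underS_le_trans[OF is_pred_underS[OF a] ag]] .
  qed (use h the_is_pred[OF h] in \<open>auto simp: underS_def aboveS_def word_le_def\<close>)
next
  case False
  then have "a \<in> W.underS g"
    using a ag by (auto simp: underS_def)
  moreover have "(b, b) \<in> W"
    using is_pred_underS[OF a] W.REFL by (auto simp: underS_def refl_on_def intro: FieldI1)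
  ultimately show ?thesis
    by (intro that[of "[Lim a]" b])
      (use False a the_is_pred[OF a] in \<open>auto simp: underS_def aboveS_def word_le_def\<close>)
qed

lemma split_rank_ge_rank_words: "(a, g) \<in> W \<Longrightarrow> split_rank_ge W (word_le W) a (rank_words W g)"
proof (induction a arbitrary: g rule: ordinal_induct)
  case (step a)
  let ?R = "word_le W"
  show ?case
  proof (cases rule: ordinal_cases[of a])
    case zero
    then show ?thesis by (rule split_rank_ge_zero)
  next
    case (pred b)
    obtain p e where c: "rank_word W g (p @ [Mid])" and be: "(b, e) \<in> W"
      and low: "(@) (p @ [Lft]) ` rank_words W e \<subseteq> rank_words W g \<inter> underS ?R (p @ [Mid])"
      and up: "(@) (p @ [Rgt]) ` rank_words W e \<subseteq> rank_words W g \<inter> aboveS ?R (p @ [Mid])"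
      using rank_words_splitting_point[OF pred step.prems] .
    have "split_rank_ge W ?R b ((@) q ` rank_words W e)" for q
      unfolding split_rank_ge_append using step.IH[OF is_pred_underS[OF pred] be] .
    then have "split_rank_ge W ?R b (rank_words W g \<inter> underS ?R (p @ [Mid]))"
      "split_rank_ge W ?R b (rank_words W g \<inter> aboveS ?R (p @ [Mid]))"
      using split_rank_ge_mono_set low up by blast+
    then show ?thesis
      unfolding split_rank_ge_pred[OF pred] using c by blast
  next
    case limit
    have "(b, g) \<in> W" if "b \<in> W.underS a" for b
      using underS_le_trans[OF that step.prems] by (simp add: underS_def)
    then show ?thesis
      unfolding split_rank_ge_limit[OF limit] using step.IH by blast
  qed
qed

lemma rank_words_below_Mid:
  assumes "is_pred W h g" and "c = [Mid] \<or> (\<exists>t. c = Lft # t)"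
  shows "rank_words W g \<inter> underS (word_le W) c \<subseteq> (@) [Lft] ` rank_words W h"
  using assms(2) by (auto simp: rank_word_pred_iff[OF assms(1)] underS_def word_le_def)

lemma rank_words_above_Rgt:
  assumes "is_pred W h g"
  shows "rank_words W g \<inter> aboveS (word_le W) (Rgt # t) \<subseteq> (@) [Rgt] ` rank_words W h"
  by (auto simp: rank_word_pred_iff[OF assms] aboveS_def word_le_def)

lemma rank_words_limit_subset: "\<nexists>h. is_pred W h g \<Longrightarrow> rank_words W g \<subseteq> rank_words_upto W g"
  by (auto simp: rank_word_limit_iff rank_words_upto_def underS_def)

lemma rank_words_upto_below:
  assumes "b \<in> Field W"
  shows "rank_words_upto W g \<inter> underS (word_le W) (Lim b # t) \<subseteq> rank_words_upto W b"
  using word_le_Lim_below[OF _ assms] by (auto simp: rank_words_upto_def underS_def)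

lemma rank_words_upto_above:
  assumes "g \<in> Field W"
  shows "rank_words_upto W g \<inter> aboveS (word_le W) (Lim g # t) \<subseteq> (@) [Lim g] ` rank_words W g"
  using word_le_Lim_above[OF _ assms] antisymD[OF W.ANTISYM]
  by (fastforce simp: rank_words_upto_def aboveS_def)

lemma not_split_rank_ge_rank_words_step:
  assumes below: "\<And>h a. h \<in> W.underS g \<Longrightarrow> h \<in> W.underS a \<Longrightarrow>
      \<not> split_rank_ge W (word_le W) a (rank_words W h)"
    and upto_below: "\<And>b s a. b \<in> W.underS g \<Longrightarrow> is_pred W b s \<Longrightarrow> s \<in> W.underS a \<Longrightarrow>
      \<not> split_rank_ge W (word_le W) a (rank_words_upto W b)"
    and a: "g \<in> W.underS a"
  shows "\<not> split_rank_ge W (word_le W) a (rank_words W g)"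
proof
  let ?R = "word_le W" and ?X = "rank_words W g"
  assume "split_rank_ge W ?R a ?X"
  then obtain c where c: "rank_word W g c"
    and low: "split_rank_ge W ?R g (?X \<inter> underS ?R c)" and up: "split_rank_ge W ?R g (?X \<inter> aboveS ?R c)"
    using split_rank_ge_split[OF a] by auto
  show False
  proof (cases "\<exists>h. is_pred W h g")
    case True
    then obtain h where h: "is_pred W h g" ..
    have "\<not> split_rank_ge W ?R g ((@) p ` rank_words W h)" for p
      unfolding split_rank_ge_append using below[OF is_pred_underS[OF h] is_pred_underS[OF h]] .
    moreover consider "c = [Mid] \<or> (\<exists>t. c = Lft # t)" | t where "c = Rgt # t"
      using c rank_word_pred_iff[OF h] by blast
    ultimately show False
      using low up rank_words_below_Mid[OF h] rank_words_above_Rgt[OF h] split_rank_ge_mono_set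
      by metis
  next
    case False
    then obtain b t where ct: "c = Lim b # t" and b: "b \<in> W.underS g"
      using c rank_word_limit_iff by blast
    have "?X \<inter> underS ?R c \<subseteq> rank_words_upto W b"
      using rank_words_limit_subset[OF False] rank_words_upto_below[of b g t] b ct
      by (auto simp: underS_def intro: FieldI1)
    moreover have "W.suc {b} \<in> W.underS g"
      using is_pred_suc[OF b] False by (auto simp: underS_def)
    ultimately show False
      using upto_below[OF b is_pred_suc(1)[OF b]] low split_rank_ge_mono_set by blast
  qed
qed

lemma not_split_rank_ge_rank_words_upto_step:
  assumes words: "\<And>a. g \<in> W.underS a \<Longrightarrow> \<not> split_rank_ge W (word_le W) a (rank_words W g)"
    and upto_below: "\<And>b s a. b \<in> W.underS g \<Longrightarrow> is_pred W b s \<Longrightarrow> s \<in> W.underS a \<Longrightarrow>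
      \<not> split_rank_ge W (word_le W) a (rank_words_upto W b)"
    and s: "is_pred W g s" and a: "s \<in> W.underS a"
  shows "\<not> split_rank_ge W (word_le W) a (rank_words_upto W g)"
proof
  let ?R = "word_le W" and ?Y = "rank_words_upto W g"
  assume "split_rank_ge W ?R a ?Y"
  then obtain c where "c \<in> ?Y"
    and low: "split_rank_ge W ?R s (?Y \<inter> underS ?R c)" and up: "split_rank_ge W ?R s (?Y \<inter> aboveS ?R c)"
    using split_rank_ge_split[OF a] by auto
  then obtain b t where ct: "c = Lim b # t" and bg: "(b, g) \<in> W"
    unfolding rank_words_upto_def by blast
  have g: "g \<in> W.underS s"
    using is_pred_underS[OF s] .
  show False
  proof (cases "b = g")
    case True
    have "\<not> split_rank_ge W ?R s ((@) [Lim g] ` rank_words W g)"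
      unfolding split_rank_ge_append using words[OF g] .
    then show False
      using up rank_words_upto_above[of g t] ct True bg split_rank_ge_mono_set
      by (metis FieldI1)
  next
    case False
    then have b: "b \<in> W.underS g"
      using bg by (simp add: underS_def)
    have "W.suc {b} \<in> W.underS s"
      using le_underS_trans[OF is_pred_suc(2)[OF b] g] .
    then show False
      using upto_below[OF b is_pred_suc(1)[OF b]] low rank_words_upto_below[of b g t] ct bg
        split_rank_ge_mono_set
      by (metis FieldI1)
  qed
qed

lemma not_split_rank_ge_rank_words_and_upto:
  "(\<forall>a. g \<in> W.underS a \<longrightarrow> \<not> split_rank_ge W (word_le W) a (rank_words W g)) \<and>
   (\<forall>s a. is_pred W g s \<longrightarrow> s \<in> W.underS a \<longrightarrow> \<not> split_rank_ge W (word_le W) a (rank_words_upto W g))"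
proof (induction g rule: ordinal_induct)
  case (step g)
  have below: "\<And>h a. h \<in> W.underS g \<Longrightarrow> h \<in> W.underS a \<Longrightarrow>
      \<not> split_rank_ge W (word_le W) a (rank_words W h)"
    using step.IH by blast
  have upto_below: "\<And>b s a. b \<in> W.underS g \<Longrightarrow> is_pred W b s \<Longrightarrow> s \<in> W.underS a \<Longrightarrow>
      \<not> split_rank_ge W (word_le W) a (rank_words_upto W b)"
    using step.IH by blast
  have words: "\<And>a. g \<in> W.underS a \<Longrightarrow> \<not> split_rank_ge W (word_le W) a (rank_words W g)"
    using not_split_rank_ge_rank_words_step[of g] below upto_below by blast
  show ?case
    using words not_split_rank_ge_rank_words_upto_step[of g] upto_below by blast
qed

corollary not_split_rank_ge_rank_words:
  "g \<in> W.underS a \<Longrightarrow> \<not> split_rank_ge W (word_le W) a (rank_words W g)"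
  using not_split_rank_ge_rank_words_and_upto by blast

lemma rank_word_letters: "rank_word W g xs \<Longrightarrow> xs \<in> lists (Lim ` Field W \<union> {Lft, Mid, Rgt})"
proof (induction xs arbitrary: g)
  case (Cons e xs)
  then show ?case
    by (cases e) (auto simp: underS_def intro: FieldI1)
qed simp

lemma Linear_order_word_le:
  assumes X: "X \<subseteq> lists (Lim ` Field W \<union> {Lft, Mid, Rgt})"
  shows "Linear_order (Restr (word_le W) X)" and "Field (Restr (word_le W) X) = X"
proof -
  let ?A = "Lim ` Field W \<union> {Lft, Mid, Rgt}" and ?r = "{(x, y). letter_less W x y}"
  have "trans ?r"
    unfolding trans_def
  proof (intro allI impI)
    fix x y z
    assume "(x, y) \<in> ?r" "(y, z) \<in> ?r"
    then show "(x, z) \<in> ?r"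
      by (cases x; cases y; cases z; simp)
        (use transD[OF W.TRANS] antisymD[OF W.ANTISYM] in blast)
  qed
  then have trans: "trans (lexord ?r)" and "asym ?r"
    using lexord_transI irrefl_letter_less asym_on_iff_irrefl_on_if_trans_on by blast+
  then have "antisym ((lexord ?r)\<^sup>=)"
    using lexord_asym antisym_on_reflcl_if_asym_on by blast
  moreover have "total_on ?A ?r"
    unfolding total_on_def using W.TOTALS by auto
  then have "total_on X (lexord ?r)"
    using total_on_subset[OF total_on_lists_lexord X] by blast
  ultimately have "antisym (Restr (word_le W) X)" "total_on X (Restr (word_le W) X)"
    unfolding word_le_def by (auto intro: antisym_Restr simp: total_on_def)
  moreover have "trans (Restr (word_le W) X)"
    unfolding word_le_def by (intro trans_Restr trans_on_reflcl trans)
  moreover show field: "Field (Restr (word_le W) X) = X"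
    unfolding word_le_def Field_def by auto
  moreover have "refl_on X (Restr (word_le W) X)"
    unfolding word_le_def refl_on_def by auto
  ultimately show "Linear_order (Restr (word_le W) X)"
    unfolding order_on_defs by auto
qed

corollary split_rank_ge_rank_words_iff:
  assumes "a \<in> Field W" and "g \<in> Field W"
  shows "split_rank_ge W (word_le W) a (rank_words W g) \<longleftrightarrow> (a, g) \<in> W"
proof
  assume split: "split_rank_ge W (word_le W) a (rank_words W g)"
  show "(a, g) \<in> W"
  proof (rule ccontr)
    assume "(a, g) \<notin> W"
    then have "g \<in> W.underS a"
      using assms W.TOTALS W.REFL by (auto simp: underS_def refl_on_def)
    then show False
      using not_split_rank_ge_rank_words split by blast
  qed
qed (rule split_rank_ge_rank_words)

end

section \<open>The rank property\<close>

lemma dir_image_Restr_iff: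
  assumes "inj_on f X" and "x \<in> X" and "y \<in> X"
  shows "(f x, f y) \<in> dir_image (Restr R X) f \<longleftrightarrow> (x, y) \<in> R"
  using assms unfolding dir_image_def inj_on_def by blast

lemma Field_ext2: "Field (ext2 r) = Inl ` Field r \<union> {Inr False, Inr True}"
  unfolding ext2_def Field_def by (auto simp: image_iff)

lemma Well_order_ext2:
  assumes "Well_order r"
  shows "Well_order (ext2 r)"
proof -
  let ?W = "ext2 r"
  have "Linear_order r" and wf: "wf (r - Id)"
    using assms by (simp_all add: well_order_on_def)
  note r = Linear_orderD[OF this(1)]
  have mem: "(u, v) \<in> ?W \<longleftrightarrow> (\<exists>x y. u = Inl x \<and> v = Inl y \<and> (x, y) \<in> r)
      \<or> (\<exists>x b. u = Inl x \<and> v = Inr b \<and> x \<in> Field r) \<or> (u = Inr False \<and> v \<in> {Inr False, Inr True})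
      \<or> (u = Inr True \<and> v = Inr True)" for u v
    unfolding ext2_def by (cases v) auto
  have "refl_on (Field ?W) ?W"
    unfolding refl_on_def Field_ext2 mem using r(1) by blast
  moreover have "trans ?W"
    unfolding trans_def mem using r(2) by (blast intro: FieldI1)
  moreover have "antisym ?W"
    unfolding antisym_def mem using r(3) by blast
  moreover have "total_on (Field ?W) ?W"
    unfolding total_on_def Field_ext2 mem using r(4) by blast
  moreover have "?W \<subseteq> Field ?W \<times> Field ?W"
    by (auto intro: FieldI1 FieldI2)
  moreover
  define key :: "'a + bool \<Rightarrow> nat \<times> 'a" where
    "key u = (case u of Inl x \<Rightarrow> (0, x) | Inr b \<Rightarrow> (Suc (of_bool b), undefined))" for u
  have "?W - Id \<subseteq> inv_image (less_than <*lex*> (r - Id)) key"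
    by (auto simp: mem key_def)
  then have "wf (?W - Id)"
    using wf_subset wf_inv_image wf_lex_prod wf_less_than wf by metis
  ultimately show ?thesis
    unfolding order_on_defs by blast
qed

lemma (in ordinal_rel) nat_copy_rk_ge_iff:
  assumes "Linear_order (Restr R X)" and "Field (Restr R X) = X" and "countable X"
  shows "\<exists>L :: nat rel. Linear_order L \<and> (\<forall>a. rk_ge W L a {} \<longleftrightarrow> split_rank_ge W R a X)"
proof -
  have inj: "inj_on (to_nat_on X) X"
    using assms(3) by (rule inj_on_to_nat_on)
  define L where "L = dir_image (Restr R X) (to_nat_on X)"
  have L: "Linear_order L"
    unfolding L_def using assms(1,2) inj by (simp add: Linear_order_dir_image)
  have "Field L = to_nat_on X ` X"
    unfolding L_def dir_image_Field assms(2) ..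
  then have "rk_ge W L a {} \<longleftrightarrow> split_rank_ge W R a X" for a
    unfolding rk_ge_empty_iff[OF L] unfolding L_def
    using split_rank_ge_embed[OF inj dir_image_Restr_iff[OF inj]] by simp
  with L show ?thesis
    by blast
qed

theorem corollary6p14:
  fixes r :: "'a rel"
  assumes "Well_order r" and "countable (Field r)"
  shows "\<exists>L :: nat rel. Linear_order L \<and> countable (Field L) \<and> rank_eq L r"
proof -
  let ?W = "ext2 r"
  interpret ordinal_rel ?W
    by unfold_locales (rule Well_order_ext2[OF assms(1)])
  define X where "X = rank_words ?W (Inr False)"
  have letters: "X \<subseteq> lists (Lim ` Field ?W \<union> {Lft, Mid, Rgt})"
    unfolding X_def using rank_word_letters by blast
  moreover have "countable (Lim ` Field ?W \<union> {Lft, Mid, Rgt})"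
    using assms(2) by (simp add: Field_ext2)
  ultimately have "countable X"
    by (metis countable_lists countable_subset)
  then obtain L :: "nat rel" where L: "Linear_order L"
    and rk: "\<And>a. rk_ge ?W L a {} \<longleftrightarrow> split_rank_ge ?W (word_le ?W) a X"
    using nat_copy_rk_ge_iff[OF Linear_order_word_le[OF letters]] by blast
  have alpha: "Inr False \<in> Field ?W" and succ: "Inr True \<in> Field ?W"
    by (simp_all add: Field_ext2)
  have "rk_ge ?W L (Inr False) {}" and "\<not> rk_ge ?W L (Inr True) {}"
    unfolding rk X_def split_rank_ge_rank_words_iff[OF alpha alpha] split_rank_ge_rank_words_iff[OF succ alpha]
    by (simp_all add: ext2_def)
  then show ?thesis
    unfolding rank_eq_def using L by blast
qed

end
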